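(* Let $N\ge 2$ and $\Omega$ the set of nonempty subsets of $\{1,\dots,N\}$. The Markov chain $R$ on $\Omega$ defined below is reversible with stationary distribution $\mathcal{M}(S)=3^{|S|}/(4^N-1)$ and has spectral gap $\lambda_R\ge \frac{1}{3N}$.
   Context: Chain $R$ on $\Omega$: from state $B$, choose $j\in\{1,\dots,N\}$ uniformly at random. If $j\in B$ and $|B|\ge2$, move to $B\setminus\{j\}$ with probability $1/3$ and stay at $B$ with probability $2/3$. If $j\in B$ and $|B|=1$, stay at $B$. If $j\notin B$, move to $B\cup\{j\}$. The spectral gap is $1$ minus the second largest eigenvalue of the transition matrix. *)

theory Defs
  imports "Jordan_Normal_Form.Jordan_Normal_Form"
begin

definition Omega :: "nat \<Rightarrow> nat set set" where
  "Omega N = {B. B \<subseteq> {1..N} \<and> B \<noteq> {}}"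

definition step_prob :: "nat \<Rightarrow> nat set \<Rightarrow> nat set \<Rightarrow> real" where
  "step_prob j B B' =
     (if j \<in> B then
        (if card B \<ge> 2
         then (1/3) * (if B' = B - {j} then 1 else 0) + (2/3) * (if B' = B then 1 else 0)
         else (if B' = B then 1 else 0))
      else (if B' = insert j B then 1 else 0))"

definition R :: "nat \<Rightarrow> nat set \<Rightarrow> nat set \<Rightarrow> real" where
  "R N B B' = (\<Sum>j\<in>{1..N}. (1 / real N) * step_prob j B B')"

definition Mdist :: "nat \<Rightarrow> nat set \<Rightarrow> real" where
  "Mdist N S = 3 ^ card S / (4 ^ N - 1)"

definition R_mat :: "nat \<Rightarrow> (nat \<Rightarrow> nat set) \<Rightarrow> real mat" where
  "R_mat N e = mat (card (Omega N)) (card (Omega N)) (\<lambda>(i, k). R N (e i) (e k))"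

(* Second largest eigenvalue, counted with algebraic multiplicity:
   the largest eigenvalue lam such that the number of eigenvalues >= lam,
   counted with multiplicity, is at least 2. *)
definition second_largest_eigenvalue :: "real mat \<Rightarrow> real" where
  "second_largest_eigenvalue A =
     Max {lam. eigenvalue A lam \<and>
               (\<Sum>mu\<in>{mu. eigenvalue A mu \<and> lam \<le> mu}. order mu (char_poly A)) \<ge> 2}"

definition spectral_gap :: "real mat \<Rightarrow> real" where
  "spectral_gap A = 1 - second_largest_eigenvalue A"

end

theory Submission
  imports Defs
begin

(* The weights 3^|B| satisfy detailed balance for each single-coordinate move, which gives
   reversibility and hence stationarity of Mdist.

   Spectral gap: changing basis so that the all-ones vector (a right eigenvector for 1) comes
   first makes the transition matrix block upper triangular, so its characteristic polynomial
   is (x - 1) q.  A root of q is an eigenvalue of a reversible matrix, hence real, and yields a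
   non-constant z with P z = mu z + beta 1; after centring z, mu is bounded by the constant c
   of any Poincare inequality <f, P f> <= c <f, f> for weighted-mean-zero f.  Thus 1 is simple
   and every other eigenvalue is at most c.

   Such an inequality with c = 1 - 4/(5N) follows from the Efron-Stein inequality on the cube
   Pow {1..N} with product weights 3^|B|, applied to f extended to the empty set by f {1}: the
   extension adds boundary terms that are again bounded by edge energies, giving
   Var f <= 5/4 E(f), while <f, f> - <f, R f> = E(f)/N. *)

section \<open>Deflating a matrix with unit row sums\<close>

lemma mult_mat_vec_nth_sum:
  assumes "A \<in> carrier_mat n m" "v \<in> carrier_vec m" "i < n"
  shows "(A *\<^sub>v v) $ i = (\<Sum>k<m. A $$ (i, k) * v $ k)"
  using assms by (auto simp: scalar_prod_def atLeast0LessThan intro!: sum.cong)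

lemma mult_mat_nth_sum:
  assumes "A \<in> carrier_mat n m" "B \<in> carrier_mat m p" "i < n" "j < p"
  shows "(A * B) $$ (i, j) = (\<Sum>k<m. A $$ (i, k) * B $$ (k, j))"
  using assms by (auto simp: scalar_prod_def atLeast0LessThan intro!: sum.cong)

text \<open>Change of basis replacing the first standard basis vector by the all-ones vector.\<close>

definition ones_col_mat :: "nat \<Rightarrow> 'a::comm_ring_1 mat" where
  "ones_col_mat n = mat n n (\<lambda>(i, j). if j = 0 \<or> i = j then 1 else 0)"

definition ones_col_inv_mat :: "nat \<Rightarrow> 'a::comm_ring_1 mat" where
  "ones_col_inv_mat n = mat n n (\<lambda>(i, j). if i = j then 1 else if j = 0 then -1 else 0)"

lemma ones_col_mat_carrier [simp]: "ones_col_mat n \<in> carrier_mat n n"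
  and ones_col_inv_mat_carrier [simp]: "ones_col_inv_mat n \<in> carrier_mat n n"
  and ones_col_mat_dims [simp]: "dim_row (ones_col_mat n) = n" "dim_col (ones_col_mat n) = n"
  and ones_col_inv_mat_dims [simp]: "dim_row (ones_col_inv_mat n) = n" "dim_col (ones_col_inv_mat n) = n"
  by (simp_all add: ones_col_mat_def ones_col_inv_mat_def)

lemma ones_col_mat_mult_vec:
  assumes y: "y \<in> carrier_vec n" and i: "i < n"
  shows "(ones_col_mat n *\<^sub>v y) $ i = (if i = 0 then y $ 0 else y $ 0 + y $ i)"
proof (cases "i = 0")
  case True
  then show ?thesis
    unfolding mult_mat_vec_nth_sum[OF ones_col_mat_carrier y i]
    by (subst sum.mono_neutral_right[where S = "{0}"]) (use i in \<open>auto simp: ones_col_mat_def\<close>)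
next
  case False
  then show ?thesis
    unfolding mult_mat_vec_nth_sum[OF ones_col_mat_carrier y i]
    by (subst sum.mono_neutral_right[where S = "{0, i}"]) (use i in \<open>auto simp: ones_col_mat_def\<close>)
qed

lemma ones_col_inv_mat_row_sum:
  assumes i: "i < n"
  shows "(\<Sum>k<n. ones_col_inv_mat n $$ (i, k)) = (if i = 0 then 1 else (0::'a::comm_ring_1))"
proof (cases "i = 0")
  case True
  then show ?thesis
    using i by (simp add: ones_col_inv_mat_def sum.delta cong: if_cong)
next
  case False
  then show ?thesis
    by (subst sum.mono_neutral_right[where S = "{0, i}"]) (use i in \<open>auto simp: ones_col_inv_mat_def\<close>)
qed

lemma ones_col_mat_inverse:
  "ones_col_mat n * ones_col_inv_mat n = (1\<^sub>m n :: 'a::comm_ring_1 mat)"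
  "ones_col_inv_mat n * ones_col_mat n = (1\<^sub>m n :: 'a mat)"
proof -
  show "ones_col_mat n * ones_col_inv_mat n = (1\<^sub>m n :: 'a mat)"
  proof (rule eq_matI)
    fix i j assume "i < dim_row (1\<^sub>m n :: 'a mat)" "j < dim_col (1\<^sub>m n :: 'a mat)"
    then have i: "i < n" and j: "j < n" by auto
    have "(ones_col_mat n * ones_col_inv_mat n) $$ (i, j)
        = (ones_col_mat n *\<^sub>v col (ones_col_inv_mat n) j) $ i"
      using i j by simp
    also have "\<dots> = (1\<^sub>m n :: 'a mat) $$ (i, j)"
      using i j by (subst ones_col_mat_mult_vec) (auto simp: ones_col_inv_mat_def)
    finally show "(ones_col_mat n * ones_col_inv_mat n) $$ (i, j) = (1\<^sub>m n :: 'a mat) $$ (i, j)" .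
  qed auto
  show "ones_col_inv_mat n * ones_col_mat n = (1\<^sub>m n :: 'a mat)"
  proof (rule eq_matI)
    fix i j assume "i < dim_row (1\<^sub>m n :: 'a mat)" "j < dim_col (1\<^sub>m n :: 'a mat)"
    then have i: "i < n" and j: "j < n" by auto
    have "(ones_col_inv_mat n * ones_col_mat n) $$ (i, j)
        = (\<Sum>k<n. ones_col_inv_mat n $$ (i, k) * (ones_col_mat n :: 'a mat) $$ (k, j))"
      by (rule mult_mat_nth_sum[OF _ _ i j]) auto
    also have "\<dots> = (if j = 0 then (\<Sum>k<n. ones_col_inv_mat n $$ (i, k)) else ones_col_inv_mat n $$ (i, j))"
      using j by (auto simp: ones_col_mat_def if_distrib sum.delta cong: if_cong)
    also have "\<dots> = (1\<^sub>m n :: 'a mat) $$ (i, j)"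
      using i j ones_col_inv_mat_row_sum[OF i] by (auto simp: ones_col_inv_mat_def)
    finally show "(ones_col_inv_mat n * ones_col_mat n) $$ (i, j) = (1\<^sub>m n :: 'a mat) $$ (i, j)" .
  qed auto
qed

text \<open>If all row sums of \<open>P\<close> are 1, then the all-ones vector is an eigenvector for 1, and in
  the basis of \<^const>\<open>ones_col_mat\<close> the matrix \<open>P\<close> becomes block upper triangular with diagonal
  blocks \<open>1\<close> and \<open>deflate P\<close>.\<close>

definition deflate :: "'a::comm_ring_1 mat \<Rightarrow> 'a mat" where
  "deflate P = (let n = dim_row P; M = ones_col_inv_mat n * P * ones_col_mat n
     in mat (n - 1) (n - 1) (\<lambda>(i, j). M $$ (Suc i, Suc j)))"

lemma deflate_carrier: "P \<in> carrier_mat n n \<Longrightarrow> deflate P \<in> carrier_mat (n - 1) (n - 1)"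
  by (simp add: deflate_def Let_def)

lemma ones_col_mat_conj:
  fixes P :: "'a::comm_ring_1 mat"
  assumes P: "P \<in> carrier_mat n n"
  shows "ones_col_mat n * (ones_col_inv_mat n * P * ones_col_mat n) = P * ones_col_mat n"
proof -
  have "ones_col_mat n * (ones_col_inv_mat n * P * ones_col_mat n)
      = ones_col_mat n * (ones_col_inv_mat n * P) * ones_col_mat n"
    by (rule assoc_mult_mat[symmetric, of _ n n _ n _ n]) (use P in auto)
  also have "ones_col_mat n * (ones_col_inv_mat n * P) = ones_col_mat n * ones_col_inv_mat n * P"
    by (rule assoc_mult_mat[symmetric, of _ n n _ n _ n]) (use P in auto)
  finally show ?thesis using P by (simp add: ones_col_mat_inverse)
qed

lemma ones_col_conj_first_col:
  fixes P :: "'a::comm_ring_1 mat"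
  assumes P: "P \<in> carrier_mat n n" and rows: "\<And>i. i < n \<Longrightarrow> (\<Sum>k<n. P $$ (i, k)) = 1"
    and i: "i < n"
  shows "(ones_col_inv_mat n * P * ones_col_mat n) $$ (i, 0) = (if i = 0 then 1 else 0)"
proof -
  have "(ones_col_inv_mat n * P * ones_col_mat n) $$ (i, 0)
      = (ones_col_inv_mat n * P *\<^sub>v col (ones_col_mat n) 0) $ i"
    using i P by simp
  also have "col (ones_col_mat n) 0 = vec n (\<lambda>_. 1)"
    using i by (auto simp: ones_col_mat_def)
  also have "(ones_col_inv_mat n * P *\<^sub>v vec n (\<lambda>_. 1)) $ i
      = (\<Sum>k<n. (ones_col_inv_mat n * P) $$ (i, k))"
    using i P by (subst mult_mat_vec_nth_sum[of _ n n]) auto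
  also have "\<dots> = (\<Sum>k<n. \<Sum>l<n. ones_col_inv_mat n $$ (i, l) * P $$ (l, k))"
    using i P by (intro sum.cong refl mult_mat_nth_sum[of _ n n _ n]) auto
  also have "\<dots> = (\<Sum>l<n. ones_col_inv_mat n $$ (i, l) * (\<Sum>k<n. P $$ (l, k)))"
    by (subst sum.swap) (simp add: sum_distrib_left)
  also have "\<dots> = (if i = 0 then 1 else 0)"
    using rows ones_col_inv_mat_row_sum[OF i] by simp
  finally show ?thesis .
qed

lemma char_poly_deflate:
  fixes P :: "'a::comm_ring_1 mat"
  assumes P: "P \<in> carrier_mat n n" and n: "0 < n"
    and rows: "\<And>i. i < n \<Longrightarrow> (\<Sum>k<n. P $$ (i, k)) = 1"
  shows "char_poly P = [:-1, 1:] * char_poly (deflate P)"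
proof -
  define M where "M = ones_col_inv_mat n * P * ones_col_mat n"
  have M: "M \<in> carrier_mat n n" unfolding M_def using P by auto
  have "similar_mat P M"
    unfolding similar_mat_def similar_mat_wit_def Let_def
  proof (intro exI conjI)
    have "ones_col_mat n * M * ones_col_inv_mat n = P * (ones_col_mat n * ones_col_inv_mat n)"
      unfolding M_def ones_col_mat_conj[OF P]
      by (rule assoc_mult_mat[of _ n n _ n _ n]) (use P in auto)
    then show "P = ones_col_mat n * M * ones_col_inv_mat n"
      using P by (simp add: ones_col_mat_inverse)
  qed (use P M in \<open>auto simp: ones_col_mat_inverse\<close>)
  then have "char_poly P = char_poly M" by (rule char_poly_similar)
  have first_col: "M $$ (i, 0) = (if i = 0 then 1 else 0)" if "i < n" for i
    unfolding M_def by (rule ones_col_conj_first_col[OF P rows that])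
  obtain m where m: "n = Suc m" using n by (cases n) auto
  define A2 where "A2 = mat 1 m (\<lambda>(_, j). M $$ (0, Suc j))"
  have blocks: "M = four_block_mat (mat 1 1 (\<lambda>_. 1)) A2 (0\<^sub>m m 1) (deflate P)"
    using M first_col P m
    by (intro eq_matI) (auto simp: A2_def deflate_def M_def Let_def)
  have "char_poly M = char_poly (mat 1 1 (\<lambda>_. 1) :: 'a mat) * char_poly (deflate P)"
    unfolding blocks
    by (rule char_poly_four_block_zeros_col) (use deflate_carrier[OF P] m in \<open>auto simp: A2_def\<close>)
  also have "char_poly (mat 1 1 (\<lambda>_. 1) :: 'a mat) = [:-1, 1:]"
    by (subst char_poly_upper_triangular[of _ 1]) (auto simp: upper_triangular_def diag_mat_def)
  finally show ?thesis
    using \<open>char_poly P = char_poly M\<close> by simp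
qed

lemma deflate_eigenvector_lift:
  fixes P :: "'a::comm_ring_1 mat"
  assumes P: "P \<in> carrier_mat n n" and ev: "eigenvector (deflate P) u \<mu>"
  shows "\<exists>\<beta>. \<forall>i<n. (P *\<^sub>v vCons 0 u) $ i = \<mu> * vCons 0 u $ i + \<beta>"
proof -
  define M where "M = ones_col_inv_mat n * P * ones_col_mat n"
  define z where "z = vCons 0 u"
  have u: "u \<in> carrier_vec (n - 1)" and Du: "deflate P *\<^sub>v u = \<mu> \<cdot>\<^sub>v u"
    using ev deflate_carrier[OF P] by (auto simp: eigenvector_def)
  obtain m where m: "n = Suc m"
    using ev deflate_carrier[OF P] by (cases n) (auto simp: eigenvector_def)
  have M: "M \<in> carrier_mat n n" unfolding M_def using P by auto
  have z: "z \<in> carrier_vec n" using u m by (simp add: z_def)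
  have z0: "z $ 0 = 0" by (simp add: z_def)
  have Mz: "(M *\<^sub>v z) $ i = \<mu> * z $ i" if i: "0 < i" "i < n" for i
  proof -
    obtain i' where i': "i = Suc i'" "i' < n - 1" using i by (cases i) auto
    have "(M *\<^sub>v z) $ i = (\<Sum>k<n. M $$ (i, k) * z $ k)"
      by (rule mult_mat_vec_nth_sum[OF M z \<open>i < n\<close>])
    also have "\<dots> = (\<Sum>k<n - 1. M $$ (i, Suc k) * u $ k)"
      using m by (simp add: z_def sum.lessThan_Suc_shift del: sum.lessThan_Suc)
    also have "\<dots> = (deflate P *\<^sub>v u) $ i'"
      unfolding mult_mat_vec_nth_sum[OF deflate_carrier[OF P] u i'(2)] using i' P
      by (simp add: deflate_def Let_def flip: M_def)
    finally show ?thesis using Du i i' u by (simp add: z_def)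
  qed
  have "ones_col_mat n *\<^sub>v z = z"
  proof (rule eq_vecI)
    fix i assume "i < dim_vec z"
    then have "i < n" using z by simp
    then show "(ones_col_mat n *\<^sub>v z) $ i = z $ i"
      unfolding ones_col_mat_mult_vec[OF z \<open>i < n\<close>] using z0 by simp
  qed (use z in simp)
  then have Pz: "P *\<^sub>v z = ones_col_mat n *\<^sub>v (M *\<^sub>v z)"
    using P M z unfolding M_def
    by (metis assoc_mult_mat_vec ones_col_mat_carrier ones_col_mat_conj)
  have "(P *\<^sub>v z) $ i = \<mu> * z $ i + (M *\<^sub>v z) $ 0" if i: "i < n" for i
    unfolding Pz ones_col_mat_mult_vec[OF mult_mat_vec_carrier[OF M z] i]
    using Mz[of i] i z0 by (cases "i = 0") auto
  then show ?thesis unfolding z_def by blast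
qed

section \<open>Spectral bound for reversible matrices\<close>

definition rayleigh_le_on_mean_zero :: "nat \<Rightarrow> (nat \<Rightarrow> real) \<Rightarrow> real mat \<Rightarrow> real \<Rightarrow> bool" where
  "rayleigh_le_on_mean_zero n w P c \<longleftrightarrow>
     (\<forall>x. (\<Sum>i<n. w i * x i) = 0 \<longrightarrow>
        (\<Sum>i<n. w i * x i * (\<Sum>k<n. P $$ (i, k) * x k)) \<le> c * (\<Sum>i<n. w i * (x i)\<^sup>2))"

lemma weighted_sum_squares_pos:
  fixes w y :: "nat \<Rightarrow> real"
  assumes "\<And>i. i < n \<Longrightarrow> 0 < w i" "i0 < n" "y i0 \<noteq> 0"
  shows "0 < (\<Sum>i<n. w i * (y i)\<^sup>2)"
proof -
  have "0 \<le> w i * (y i)\<^sup>2" if "i < n" for i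
    using assms(1)[OF that] by simp
  then have "w i0 * (y i0)\<^sup>2 \<le> (\<Sum>i<n. w i * (y i)\<^sup>2)"
    by (intro member_le_sum) (use assms(2) in auto)
  moreover have "0 < w i0 * (y i0)\<^sup>2" using assms by simp
  ultimately show ?thesis by linarith
qed

lemma affine_eigenvector_le_rayleigh_bound:
  fixes P :: "real mat" and w v :: "nat \<Rightarrow> real"
  assumes w: "\<And>i. i < n \<Longrightarrow> 0 < w i"
    and rows: "\<And>i. i < n \<Longrightarrow> (\<Sum>k<n. P $$ (i, k)) = 1"
    and bound: "rayleigh_le_on_mean_zero n w P c"
    and ev: "\<And>i. i < n \<Longrightarrow> (\<Sum>k<n. P $$ (i, k) * v k) = \<mu> * v i + \<beta>"
    and nonconst: "i0 < n" "j0 < n" "v i0 \<noteq> v j0"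
  shows "\<mu> \<le> c"
proof -
  define W where "W = (\<Sum>i<n. w i)"
  have "0 < W" unfolding W_def using nonconst(1) w by (intro sum_pos) auto
  define \<alpha> where "\<alpha> = (\<Sum>i<n. w i * v i) / W"
  define y where "y i = v i - \<alpha>" for i
  have "(\<Sum>i<n. w i * y i) = (\<Sum>i<n. w i * v i) - \<alpha> * W"
    by (simp add: y_def W_def right_diff_distrib sum_subtractf sum_distrib_left mult.commute)
  then have mean_zero: "(\<Sum>i<n. w i * y i) = 0"
    using \<open>0 < W\<close> by (simp add: \<alpha>_def)
  define \<gamma> where "\<gamma> = \<mu> * \<alpha> + \<beta> - \<alpha>"
  have Py: "(\<Sum>k<n. P $$ (i, k) * y k) = \<mu> * y i + \<gamma>" if "i < n" for i
  proof -
    have "(\<Sum>k<n. P $$ (i, k) * y k) = (\<Sum>k<n. P $$ (i, k) * v k) - \<alpha> * (\<Sum>k<n. P $$ (i, k))"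
      by (simp add: y_def algebra_simps sum_subtractf sum_distrib_left)
    then show ?thesis
      using ev[OF that] rows[OF that] by (simp add: y_def \<gamma>_def algebra_simps)
  qed
  have "(\<Sum>i<n. w i * y i * (\<Sum>k<n. P $$ (i, k) * y k))
      = (\<Sum>i<n. \<mu> * (w i * (y i)\<^sup>2) + \<gamma> * (w i * y i))"
    by (intro sum.cong refl) (simp only: lessThan_iff Py, simp add: power2_eq_square algebra_simps)
  also have "\<dots> = \<mu> * (\<Sum>i<n. w i * (y i)\<^sup>2)"
    using mean_zero by (simp add: sum.distrib flip: sum_distrib_left)
  finally have "(\<Sum>i<n. w i * y i * (\<Sum>k<n. P $$ (i, k) * y k)) = \<mu> * (\<Sum>i<n. w i * (y i)\<^sup>2)" .
  moreover have "(\<Sum>i<n. w i * y i * (\<Sum>k<n. P $$ (i, k) * y k)) \<le> c * (\<Sum>i<n. w i * (y i)\<^sup>2)"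
    using bound mean_zero unfolding rayleigh_le_on_mean_zero_def by blast
  ultimately have "\<mu> * (\<Sum>i<n. w i * (y i)\<^sup>2) \<le> c * (\<Sum>i<n. w i * (y i)\<^sup>2)" by simp
  moreover obtain i1 where "i1 < n" "y i1 \<noteq> 0"
    using nonconst by (metis y_def eq_iff_diff_eq_0)
  ultimately show ?thesis
    using weighted_sum_squares_pos[OF w] by (meson mult_le_cancel_right_pos)
qed

lemma reversible_eigenvalue_real:
  fixes P :: "real mat" and w :: "nat \<Rightarrow> real"
  assumes P: "P \<in> carrier_mat n n" and w: "\<And>i. i < n \<Longrightarrow> 0 < w i"
    and rev: "\<And>i k. i < n \<Longrightarrow> k < n \<Longrightarrow> w i * P $$ (i, k) = w k * P $$ (k, i)"
    and ev: "eigenvalue (map_mat complex_of_real P) z"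
  shows "Im z = 0"
proof -
  let ?P = "map_mat complex_of_real P"
  obtain v where v: "v \<in> carrier_vec n" "v \<noteq> 0\<^sub>v n" and Pv: "?P *\<^sub>v v = z \<cdot>\<^sub>v v"
    using ev P by (auto simp: eigenvalue_def eigenvector_def)
  have Pv_nth: "(\<Sum>k<n. complex_of_real (P $$ (i, k)) * v $ k) = z * v $ i" if i: "i < n" for i
    using arg_cong[OF Pv, of "\<lambda>u. u $ i"] mult_mat_vec_nth_sum[of ?P n n v i] i P v by simp
  define S where "S = (\<Sum>i<n. w i * (cmod (v $ i))\<^sup>2)"
  define H where "H = (\<Sum>i<n. \<Sum>k<n. complex_of_real (w i * P $$ (i, k)) * cnj (v $ i) * v $ k)"
  have "H = (\<Sum>i<n. complex_of_real (w i) * cnj (v $ i) * (\<Sum>k<n. complex_of_real (P $$ (i, k)) * v $ k))"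
    unfolding H_def by (simp add: sum_distrib_left mult_ac)
  also have "\<dots> = (\<Sum>i<n. z * (complex_of_real (w i) * (v $ i * cnj (v $ i))))"
    by (intro sum.cong refl) (simp only: lessThan_iff Pv_nth, simp add: mult_ac)
  also have "\<dots> = z * complex_of_real S"
    unfolding S_def of_real_sum sum_distrib_left
    by (intro sum.cong refl) (simp add: complex_norm_square[symmetric] del: of_real_power)
  finally have H_eq: "H = z * complex_of_real S" .
  \<comment> \<open>reversibility makes the form \<open>H\<close> Hermitian\<close>
  have "cnj H = (\<Sum>k<n. \<Sum>i<n. complex_of_real (w i * P $$ (i, k)) * v $ i * cnj (v $ k))"
    unfolding H_def by (subst sum.swap) (simp add: mult_ac)
  also have "\<dots> = H"
    unfolding H_def by (intro sum.cong refl) (simp add: rev mult_ac)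
  finally have "Im H = 0" by (metis Reals_cnj_iff complex_is_Real_iff)
  moreover obtain i1 where "i1 < n" "v $ i1 \<noteq> 0"
    using v by (metis carrier_vecD eq_vecI index_zero_vec(1,2))
  then have "0 < S"
    unfolding S_def by (intro weighted_sum_squares_pos[OF w]) auto
  ultimately show ?thesis using H_eq by simp
qed

lemma reversible_char_poly_factor_has_real_root:
  fixes P :: "real mat" and w :: "nat \<Rightarrow> real"
  assumes P: "P \<in> carrier_mat n n" and w: "\<And>i. i < n \<Longrightarrow> 0 < w i"
    and rev: "\<And>i k. i < n \<Longrightarrow> k < n \<Longrightarrow> w i * P $$ (i, k) = w k * P $$ (k, i)"
    and dvd: "q dvd char_poly P" and deg: "0 < degree q"
  shows "\<exists>r. poly q r = 0"
proof -
  interpret map_poly_comm_ring_hom complex_of_real ..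
  obtain z where z: "poly (map_poly complex_of_real q) z = 0"
    using fundamental_theorem_of_algebra[of "map_poly complex_of_real q"] deg
    by (auto simp: constant_degree)
  obtain p where "char_poly P = q * p" using dvd by (elim dvdE)
  then have "poly (char_poly (map_mat complex_of_real P)) z = 0"
    using z by (simp add: of_real_hom.char_poly_hom[OF P] hom_mult)
  then have "eigenvalue (map_mat complex_of_real P) z"
    using eigenvalue_root_char_poly[of "map_mat complex_of_real P" n] P by simp
  then have "Im z = 0" using reversible_eigenvalue_real[OF P w rev] by blast
  then have "z = complex_of_real (Re z)" by (simp add: complex_eq_iff)
  then have "complex_of_real (poly q (Re z)) = 0"
    using z by (metis of_real_hom.poly_map_poly)
  then show ?thesis by auto
qed

lemma second_largest_eigenvalue_le_of_char_poly:
  fixes P :: "real mat"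
  assumes P: "P \<in> carrier_mat n n" and cp: "char_poly P = [:-1, 1:] * q"
    and root: "poly q r = 0" and roots_le: "\<And>\<mu>. poly q \<mu> = 0 \<Longrightarrow> \<mu> \<le> c" and "c < 1"
  shows "second_largest_eigenvalue P \<le> c"
proof -
  let ?mult = "\<lambda>\<mu>. order \<mu> (char_poly P)"
  define S where "S = {lam. eigenvalue P lam \<and> 2 \<le> (\<Sum>\<mu>\<in>{\<mu>. eigenvalue P \<mu> \<and> lam \<le> \<mu>}. ?mult \<mu>)}"
  have eig: "eigenvalue P \<mu> \<longleftrightarrow> \<mu> = 1 \<or> poly q \<mu> = 0" for \<mu>
    by (auto simp: eigenvalue_root_char_poly[OF P] cp)
  have "q \<noteq> 0" using roots_le[of "c + 1"] by auto
  then have cp_nz: "char_poly P \<noteq> 0" unfolding cp by (intro no_zero_divisors) auto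
  have "poly q 1 \<noteq> 0" using roots_le \<open>c < 1\<close> by force
  then have "order 1 q = 0" by (rule order_0I)
  have "?mult 1 = order 1 [:-1, 1::real:] + order 1 q"
    unfolding cp by (rule Polynomial.order_mult) (use cp_nz[unfolded cp] in blast)
  also have "order 1 [:-1, 1::real:] = 1" using order_linear[of "1::real"] by simp
  finally have mult_1: "?mult 1 = 1" using \<open>order 1 q = 0\<close> by simp
  have fin: "finite {\<mu>. eigenvalue P \<mu>}"
    by (rule finite_subset[OF _ poly_roots_finite[OF cp_nz]]) (simp add: eigenvalue_root_char_poly[OF P] subset_eq)
  have "r \<in> S"
  proof -
    have "r < 1" using roots_le[OF root] \<open>c < 1\<close> by simp
    have "?mult r + ?mult 1 = (\<Sum>\<mu>\<in>{r, 1}. ?mult \<mu>)" using \<open>r < 1\<close> by simp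
    also have "\<dots> \<le> (\<Sum>\<mu>\<in>{\<mu>. eigenvalue P \<mu> \<and> r \<le> \<mu>}. ?mult \<mu>)"
      by (rule sum_mono2) (use fin eig root \<open>r < 1\<close> in auto)
    finally show ?thesis
      using order_root[of "char_poly P" r] cp_nz mult_1 eig root
      by (auto simp: S_def cp)
  qed
  moreover have "lam \<le> c" if "lam \<in> S" for lam
  proof (rule ccontr)
    assume "\<not> lam \<le> c"
    then have "{\<mu>. eigenvalue P \<mu> \<and> lam \<le> \<mu>} \<subseteq> {1}"
      by (auto simp: eig dest: roots_le)
    then have "(\<Sum>\<mu>\<in>{\<mu>. eigenvalue P \<mu> \<and> lam \<le> \<mu>}. ?mult \<mu>) \<le> (\<Sum>\<mu>\<in>{1}. ?mult \<mu>)"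
      by (intro sum_mono2) auto
    with that mult_1 show False by (simp add: S_def)
  qed
  moreover have "finite S" by (rule finite_subset[OF _ fin]) (auto simp: S_def)
  ultimately show ?thesis
    unfolding second_largest_eigenvalue_def S_def[symmetric] by (subst Max_le_iff) auto
qed

theorem second_largest_eigenvalue_le_rayleigh_bound:
  fixes P :: "real mat" and w :: "nat \<Rightarrow> real"
  assumes P: "P \<in> carrier_mat n n" and "2 \<le> n"
    and w: "\<And>i. i < n \<Longrightarrow> 0 < w i"
    and rows: "\<And>i. i < n \<Longrightarrow> (\<Sum>k<n. P $$ (i, k)) = 1"
    and rev: "\<And>i k. i < n \<Longrightarrow> k < n \<Longrightarrow> w i * P $$ (i, k) = w k * P $$ (k, i)"
    and bound: "rayleigh_le_on_mean_zero n w P c" and "c < 1"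
  shows "second_largest_eigenvalue P \<le> c"
proof -
  let ?D = "deflate P"
  have cp: "char_poly P = [:-1, 1:] * char_poly ?D"
    using char_poly_deflate[OF P _ rows] \<open>2 \<le> n\<close> by simp
  have roots_le: "\<mu> \<le> c" if root: "poly (char_poly ?D) \<mu> = 0" for \<mu>
  proof -
    obtain u where u: "eigenvector ?D u \<mu>"
      using root eigenvalue_root_char_poly[OF deflate_carrier[OF P]]
      by (auto simp: eigenvalue_def)
    then obtain \<beta> where \<beta>: "\<forall>i<n. (P *\<^sub>v vCons 0 u) $ i = \<mu> * vCons 0 u $ i + \<beta>"
      using deflate_eigenvector_lift[OF P] by blast
    have "u \<in> carrier_vec (n - 1)" "u \<noteq> 0\<^sub>v (n - 1)"
      using u deflate_carrier[OF P] by (auto simp: eigenvector_def)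
    then obtain j where "j < n - 1" "u $ j \<noteq> 0"
      by (metis carrier_vecD eq_vecI index_zero_vec(1,2))
    moreover have "vCons 0 u \<in> carrier_vec n"
      using \<open>u \<in> carrier_vec (n - 1)\<close> \<open>2 \<le> n\<close> by (cases n) auto
    ultimately show ?thesis
      using \<beta> mult_mat_vec_nth_sum[OF P]
      by (intro affine_eigenvector_le_rayleigh_bound[OF w rows bound,
            of "\<lambda>k. vCons 0 u $ k" \<mu> \<beta> "Suc j" 0]) auto
  qed
  have "0 < degree (char_poly ?D)"
    using degree_monic_char_poly[OF deflate_carrier[OF P]] \<open>2 \<le> n\<close> by simp
  moreover have "char_poly ?D dvd char_poly P" unfolding cp by (rule dvd_triv_right)
  ultimately obtain r where "poly (char_poly ?D) r = 0"
    using reversible_char_poly_factor_has_real_root[OF P w rev] by blast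
  then show ?thesis
    using second_largest_eigenvalue_le_of_char_poly[OF P cp _ roots_le \<open>c < 1\<close>] by blast
qed

lemma second_largest_eigenvalue_kernel_le:
  fixes K :: "'a \<Rightarrow> 'a \<Rightarrow> real" and \<pi> :: "'a \<Rightarrow> real"
  assumes e: "bij_betw e {..<n} S" and "2 \<le> n"
    and pos: "\<And>x. x \<in> S \<Longrightarrow> 0 < \<pi> x"
    and rows: "\<And>x. x \<in> S \<Longrightarrow> (\<Sum>y\<in>S. K x y) = 1"
    and rev: "\<And>x y. x \<in> S \<Longrightarrow> y \<in> S \<Longrightarrow> \<pi> x * K x y = \<pi> y * K y x"
    and rayleigh: "\<And>f. (\<Sum>x\<in>S. \<pi> x * f x) = 0 \<Longrightarrow>
      (\<Sum>x\<in>S. \<pi> x * f x * (\<Sum>y\<in>S. K x y * f y)) \<le> c * (\<Sum>x\<in>S. \<pi> x * (f x)\<^sup>2)"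
    and "c < 1"
  shows "second_largest_eigenvalue (mat n n (\<lambda>(i, k). K (e i) (e k))) \<le> c"
proof -
  let ?P = "mat n n (\<lambda>(i, k). K (e i) (e k))"
  have eS: "e i \<in> S" if "i < n" for i using bij_betw_apply[OF e] that by auto
  have reindex: "(\<Sum>i<n. h (e i)) = (\<Sum>x\<in>S. h x)" for h :: "'a \<Rightarrow> real"
    by (rule sum.reindex_bij_betw[OF e])
  have "rayleigh_le_on_mean_zero n (\<lambda>i. \<pi> (e i)) ?P c"
    unfolding rayleigh_le_on_mean_zero_def
  proof (intro allI impI)
    fix x :: "nat \<Rightarrow> real"
    define f where "f y = x (the_inv_into {..<n} e y)" for y
    have fe: "f (e i) = x i" if "i < n" for i
      using e that by (simp add: f_def bij_betw_def the_inv_into_f_f)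
    have inner: "(\<Sum>k<n. ?P $$ (i, k) * x k) = (\<Sum>y\<in>S. K (e i) y * f y)" if "i < n" for i
      using that fe reindex[of "\<lambda>y. K (e i) y * f y"] by simp
    assume "(\<Sum>i<n. \<pi> (e i) * x i) = 0"
    then have "(\<Sum>y\<in>S. \<pi> y * f y) = 0"
      using fe reindex[of "\<lambda>y. \<pi> y * f y"] by simp
    then have "(\<Sum>y\<in>S. \<pi> y * f y * (\<Sum>y'\<in>S. K y y' * f y')) \<le> c * (\<Sum>y\<in>S. \<pi> y * (f y)\<^sup>2)"
      by (rule rayleigh)
    then show "(\<Sum>i<n. \<pi> (e i) * x i * (\<Sum>k<n. ?P $$ (i, k) * x k)) \<le> c * (\<Sum>i<n. \<pi> (e i) * (x i)\<^sup>2)"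
      using fe inner reindex[of "\<lambda>y. \<pi> y * f y * (\<Sum>y'\<in>S. K y y' * f y')"]
        reindex[of "\<lambda>y. \<pi> y * (f y)\<^sup>2"]
      by simp
  qed
  moreover have "(\<Sum>k<n. ?P $$ (i, k)) = 1" if "i < n" for i
    using that rows[OF eS[OF that]] reindex[of "K (e i)"] by simp
  ultimately show ?thesis
    using \<open>2 \<le> n\<close> \<open>c < 1\<close> pos eS rev
    by (intro second_largest_eigenvalue_le_rayleigh_bound[where w = "\<lambda>i. \<pi> (e i)"]) auto
qed

section \<open>The Efron--Stein inequality on a weighted cube\<close>

lemma sum_Pow_insert:
  assumes "finite A" "a \<notin> A"
  shows "(\<Sum>B\<in>Pow (insert a A). f B) = (\<Sum>B\<in>Pow A. f B) + (\<Sum>B\<in>Pow A. f (insert a B))"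
proof -
  have "inj_on (insert a) (Pow A)" using assms(2) by (auto simp: inj_on_def)
  moreover have "Pow A \<inter> insert a ` Pow A = {}" using assms(2) by auto
  ultimately show ?thesis
    using assms(1) by (simp add: Pow_insert sum.union_disjoint sum.reindex)
qed

lemma sum_power_card_Pow:
  fixes t :: "'b::comm_semiring_1"
  assumes "finite A"
  shows "(\<Sum>B\<in>Pow A. t ^ card B) = (t + 1) ^ card A"
  using prod_add[OF assms, of "\<lambda>_. t" "\<lambda>_. 1"] by simp

lemma weighted_square_sum_le:
  fixes v h :: "'b \<Rightarrow> real"
  assumes "finite S" "\<And>x. x \<in> S \<Longrightarrow> 0 \<le> v x" "0 < (\<Sum>x\<in>S. v x)"
  shows "(\<Sum>x\<in>S. v x * h x)\<^sup>2 \<le> (\<Sum>x\<in>S. v x) * (\<Sum>x\<in>S. v x * (h x)\<^sup>2)"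
proof -
  define W where "W = (\<Sum>x\<in>S. v x)"
  define m where "m = (\<Sum>x\<in>S. v x * h x) / W"
  have "0 \<le> (\<Sum>x\<in>S. v x * (h x - m)\<^sup>2)"
    by (intro sum_nonneg) (use assms(2) in simp)
  also have "\<dots> = (\<Sum>x\<in>S. v x * (h x)\<^sup>2) - 2 * m * (\<Sum>x\<in>S. v x * h x) + m\<^sup>2 * W"
    unfolding W_def
    by (simp add: power2_eq_square algebra_simps sum.distrib sum_subtractf sum_distrib_left)
  also have "\<dots> = (\<Sum>x\<in>S. v x * (h x)\<^sup>2) - (\<Sum>x\<in>S. v x * h x)\<^sup>2 / W"
    unfolding m_def using assms(3) by (simp add: W_def power2_eq_square field_simps)
  finally show ?thesis
    using assms(3) unfolding W_def by (simp add: divide_le_eq mult.commute)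
qed

lemma sum_Pow_insert_power_card:
  fixes f :: "'b set \<Rightarrow> 'c::comm_semiring_1"
  assumes "finite A" "a \<notin> A"
  shows "(\<Sum>B\<in>Pow (insert a A). t ^ card B * f B)
    = (\<Sum>B\<in>Pow A. t ^ card B * f B) + t * (\<Sum>B\<in>Pow A. t ^ card B * f (insert a B))"
proof -
  have "t ^ card (insert a B) * f (insert a B) = t * (t ^ card B * f (insert a B))" if "B \<in> Pow A" for B
  proof -
    have "finite B" "a \<notin> B" using assms that by (auto intro: finite_subset)
    then show ?thesis by (simp add: mult.assoc)
  qed
  then have "(\<Sum>B\<in>Pow A. t ^ card (insert a B) * f (insert a B))
      = t * (\<Sum>B\<in>Pow A. t ^ card B * f (insert a B))"
    unfolding sum_distrib_left by (rule sum.cong[OF refl])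
  then show ?thesis
    using assms by (simp add: sum_Pow_insert)
qed

definition cube_energy :: "'c::comm_ring_1 \<Rightarrow> 'b set \<Rightarrow> ('b set \<Rightarrow> 'c) \<Rightarrow> 'c" where
  "cube_energy t A g = (\<Sum>j\<in>A. \<Sum>B\<in>Pow (A - {j}). t ^ card B * (g (insert j B) - g B)\<^sup>2)"

lemma cube_energy_insert:
  assumes "finite A" "a \<notin> A"
  shows "cube_energy t (insert a A) g
    = (\<Sum>B\<in>Pow A. t ^ card B * (g (insert a B) - g B)\<^sup>2)
      + cube_energy t A g + t * cube_energy t A (\<lambda>B. g (insert a B))"
proof -
  have "(\<Sum>B\<in>Pow (insert a A - {j}). t ^ card B * (g (insert j B) - g B)\<^sup>2)
      = (\<Sum>B\<in>Pow (A - {j}). t ^ card B * (g (insert j B) - g B)\<^sup>2)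
        + t * (\<Sum>B\<in>Pow (A - {j}). t ^ card B * (g (insert a (insert j B)) - g (insert a B))\<^sup>2)"
    if "j \<in> A" for j
  proof -
    have "insert a A - {j} = insert a (A - {j})" using that assms(2) by auto
    then show ?thesis
      using assms by (simp add: sum_Pow_insert_power_card insert_commute)
  qed
  then show ?thesis
    using assms by (simp add: cube_energy_def sum.distrib sum_distrib_left cong: sum.cong)
qed

lemma mixture_variance_eq:
  fixes T0 T1 S0 S1 K t :: real
  assumes "0 < K" "0 \<le> t"
  shows "(T0 + t * T1) - (S0 + t * S1)\<^sup>2 / ((t + 1) * K)
    = (T0 - S0\<^sup>2 / K) + t * (T1 - S1\<^sup>2 / K) + t / ((t + 1) * K) * (S0 - S1)\<^sup>2"
  using assms by (simp add: divide_simps add_pos_nonneg) (simp add: algebra_simps power2_eq_square)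

text \<open>The Efron--Stein inequality for the product measure on \<^term>\<open>Pow A\<close> giving each
  element of \<open>A\<close> probability \<open>t / (1 + t)\<close>, with weights left unnormalised.\<close>

lemma efron_stein_Pow:
  fixes g :: "'b set \<Rightarrow> real"
  assumes "finite A" "0 \<le> t"
  shows "(\<Sum>B\<in>Pow A. t ^ card B * (g B)\<^sup>2) - (\<Sum>B\<in>Pow A. t ^ card B * g B)\<^sup>2 / (t + 1) ^ card A
    \<le> t / (t + 1) * cube_energy t A g"
  using assms(1)
proof (induction A arbitrary: g rule: finite_induct)
  case empty
  then show ?case by (simp add: cube_energy_def)
next
  case (insert a A)
  let ?g1 = "\<lambda>B. g (insert a B)"
  define K where "K = (t + 1) ^ card A"
  define T0 where "T0 = (\<Sum>B\<in>Pow A. t ^ card B * (g B)\<^sup>2)"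
  define T1 where "T1 = (\<Sum>B\<in>Pow A. t ^ card B * (?g1 B)\<^sup>2)"
  define S0 where "S0 = (\<Sum>B\<in>Pow A. t ^ card B * g B)"
  define S1 where "S1 = (\<Sum>B\<in>Pow A. t ^ card B * ?g1 B)"
  define Ea where "Ea = (\<Sum>B\<in>Pow A. t ^ card B * (?g1 B - g B)\<^sup>2)"
  have "0 < K" using \<open>0 \<le> t\<close> by (simp add: K_def)
  have "(S0 - S1)\<^sup>2 = (\<Sum>B\<in>Pow A. t ^ card B * (?g1 B - g B))\<^sup>2"
    by (simp add: S0_def S1_def sum_subtractf right_diff_distrib power2_commute)
  also have "\<dots> \<le> K * Ea"
    unfolding Ea_def K_def sum_power_card_Pow[OF insert.hyps(1), symmetric]
    using insert.hyps(1) \<open>0 \<le> t\<close>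
    by (intro weighted_square_sum_le) (auto simp: sum_power_card_Pow add_pos_nonneg)
  finally have "t / ((t + 1) * K) * (S0 - S1)\<^sup>2 \<le> t / ((t + 1) * K) * (K * Ea)"
    using \<open>0 \<le> t\<close> \<open>0 < K\<close> by (intro mult_left_mono) auto
  then have between: "t / ((t + 1) * K) * (S0 - S1)\<^sup>2 \<le> t / (t + 1) * Ea"
    using \<open>0 < K\<close> by simp
  have "t * (T1 - S1\<^sup>2 / K) \<le> t * (t / (t + 1) * cube_energy t A ?g1)"
    using insert.IH[of ?g1] \<open>0 \<le> t\<close> by (intro mult_left_mono) (simp_all add: T1_def S1_def K_def)
  then have "(T0 + t * T1) - (S0 + t * S1)\<^sup>2 / ((t + 1) * K)
      \<le> t / (t + 1) * (Ea + cube_energy t A g + t * cube_energy t A ?g1)"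
    using insert.IH[of g] between
    unfolding mixture_variance_eq[OF \<open>0 < K\<close> \<open>0 \<le> t\<close>]
    by (simp add: T0_def S0_def K_def algebra_simps)
  then show ?case
    using insert.hyps
    by (simp add: sum_Pow_insert_power_card cube_energy_insert T0_def T1_def S0_def S1_def Ea_def K_def)
qed

section \<open>The chain\<close>

lemma reversible_imp_stationary:
  fixes K :: "'a \<Rightarrow> 'a \<Rightarrow> real"
  assumes rev: "\<And>x y. x \<in> S \<Longrightarrow> y \<in> S \<Longrightarrow> \<pi> x * K x y = \<pi> y * K y x"
    and rows: "\<And>x. x \<in> S \<Longrightarrow> (\<Sum>y\<in>S. K x y) = 1" and "y \<in> S"
  shows "(\<Sum>x\<in>S. \<pi> x * K x y) = \<pi> y"
proof -
  have "(\<Sum>x\<in>S. \<pi> x * K x y) = \<pi> y * (\<Sum>x\<in>S. K y x)"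
    using \<open>y \<in> S\<close> by (simp add: rev sum_distrib_left)
  then show ?thesis using rows[OF \<open>y \<in> S\<close>] by simp
qed

lemma Pow_atLeastAtMost_eq_insert_Omega: "Pow {1..N} = insert {} (Omega N)"
  by (auto simp: Omega_def)

lemma finite_Omega [simp]: "finite (Omega N)"
  by (rule finite_subset[of _ "Pow {1..N}"]) (auto simp: Omega_def)

lemma Omega_memD:
  assumes "B \<in> Omega N"
  shows "finite B" "B \<noteq> {}" "B \<subseteq> {1..N}"
  using assms by (auto simp: Omega_def intro: finite_subset)

lemma sum_Pow_atLeastAtMost_eq: "(\<Sum>B\<in>Pow {1..N}. h B) = h {} + (\<Sum>B\<in>Omega N. h B)"
  unfolding Pow_atLeastAtMost_eq_insert_Omega by (simp add: Omega_def)

lemma sum_Mdist: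
  assumes "1 \<le> N"
  shows "(\<Sum>S\<in>Omega N. Mdist N S) = 1"
proof -
  have "(\<Sum>S\<in>Omega N. (3::real) ^ card S) = 4 ^ N - 1"
    using sum_Pow_atLeastAtMost_eq[of "\<lambda>S. (3::real) ^ card S" N] sum_power_card_Pow[of "{1..N}" "3::real"]
    by simp
  moreover have "(1::real) < 4 ^ N" using assms by simp
  ultimately show ?thesis by (simp add: Mdist_def flip: sum_divide_distrib)
qed

definition step_avg :: "nat \<Rightarrow> (nat set \<Rightarrow> real) \<Rightarrow> nat set \<Rightarrow> real" where
  "step_avg j f B =
     (if j \<in> B then (if 2 \<le> card B then 1/3 * f (B - {j}) + 2/3 * f B else f B)
      else f (insert j B))"

lemma Diff_singleton_in_Omega:
  assumes "B \<in> Omega N" "2 \<le> card B"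
  shows "B - {j} \<in> Omega N"
proof -
  have "1 \<le> card (B - {j})" using assms(2) card_Diff_singleton_if[of B j] by auto
  then have "B - {j} \<noteq> {}" by (metis card.empty not_one_le_zero)
  then show ?thesis using assms(1) by (auto simp: Omega_def)
qed

lemma insert_in_Omega: "B \<in> Omega N \<Longrightarrow> j \<in> {1..N} \<Longrightarrow> insert j B \<in> Omega N"
  by (auto simp: Omega_def)

lemma sum_indicator_mult:
  fixes f :: "'a \<Rightarrow> 'b::semiring_1"
  assumes "finite S"
  shows "(\<Sum>y\<in>S. (if y = x then 1 else 0) * f y) = (if x \<in> S then f x else 0)"
proof -
  have "(\<Sum>y\<in>S. (if y = x then 1 else 0) * f y) = (\<Sum>y\<in>S. if y = x then f y else 0)"
    by (rule sum.cong) auto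
  then show ?thesis using assms by (simp add: sum.delta)
qed

lemma sum_step_prob_mult:
  assumes B: "B \<in> Omega N" and j: "j \<in> {1..N}"
  shows "(\<Sum>B'\<in>Omega N. step_prob j B B' * f B') = step_avg j f B"
proof (cases "j \<in> B \<and> 2 \<le> card B")
  case True
  then show ?thesis
    using B Diff_singleton_in_Omega[OF B]
    by (simp add: step_prob_def step_avg_def distrib_right sum.distrib mult.assoc sum_indicator_mult
        flip: sum_distrib_left sum_divide_distrib)
next
  case False
  then show ?thesis
    using B insert_in_Omega[OF B j] by (auto simp: step_prob_def step_avg_def sum_indicator_mult)
qed

lemma sum_R_mult:
  assumes "B \<in> Omega N"
  shows "(\<Sum>B'\<in>Omega N. R N B B' * f B') = (\<Sum>j\<in>{1..N}. step_avg j f B) / N"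
proof -
  have "(\<Sum>B'\<in>Omega N. R N B B' * f B') = (\<Sum>j\<in>{1..N}. \<Sum>B'\<in>Omega N. step_prob j B B' * f B') / N"
    unfolding R_def sum_distrib_right by (subst sum.swap) (simp add: sum_divide_distrib)
  then show ?thesis using assms by (simp add: sum_step_prob_mult)
qed

lemma sum_R_eq_1:
  assumes "1 \<le> N" "B \<in> Omega N"
  shows "(\<Sum>B'\<in>Omega N. R N B B') = 1"
proof -
  have "step_avg j (\<lambda>_. 1) B = 1" for j by (simp add: step_avg_def)
  then show ?thesis using sum_R_mult[OF assms(2), of "\<lambda>_. 1"] assms(1) by simp
qed

lemma step_prob_reversible:
  assumes B: "B \<in> Omega N" and B': "B' \<in> Omega N"
  shows "3 ^ card B * step_prob j B B' = 3 ^ card B' * step_prob j B' B"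
proof -
  have "3 ^ card X * step_prob j X Y = 3 ^ card Y * step_prob j Y X"
    if "X \<in> Omega N" "Y \<in> Omega N" "j \<in> X" "j \<notin> Y" for X Y
  proof (cases "X = insert j Y")
    case True
    then have "card X = Suc (card Y)" "X - {j} = Y" "Y \<noteq> X"
      using that Omega_memD[OF that(2)] by auto
    moreover have "1 \<le> card Y"
      using Omega_memD[OF that(2)] by (simp add: Suc_le_eq card_gt_0_iff)
    ultimately have "step_prob j X Y = 1/3" "step_prob j Y X = 1"
      using that True by (auto simp: step_prob_def)
    then show ?thesis using \<open>card X = Suc (card Y)\<close> by simp
  next
    case False
    then show ?thesis using that by (auto simp: step_prob_def)
  qed
  then show ?thesis
    using B B' by (cases "j \<in> B"; cases "j \<in> B'") (auto simp: step_prob_def)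
qed

lemma R_reversible:
  assumes "B \<in> Omega N" "B' \<in> Omega N"
  shows "3 ^ card B * R N B B' = 3 ^ card B' * R N B' B"
  unfolding R_def sum_distrib_left
  by (intro sum.cong refl) (metis step_prob_reversible[OF assms] mult.left_commute)

definition Omega_avoiding :: "nat \<Rightarrow> nat \<Rightarrow> nat set set" where
  "Omega_avoiding N j = {B \<in> Omega N. j \<notin> B}"

definition edge_energy :: "nat \<Rightarrow> (nat set \<Rightarrow> real) \<Rightarrow> nat \<Rightarrow> real" where
  "edge_energy N f j = (\<Sum>B\<in>Omega_avoiding N j. 3 ^ card B * (f (insert j B) - f B)\<^sup>2)"

lemma finite_Omega_avoiding [simp]: "finite (Omega_avoiding N j)"
  by (simp add: Omega_avoiding_def)

lemma sum_Omega_split: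
  assumes j: "j \<in> {1..N}"
  shows "(\<Sum>B\<in>Omega N. h B) = h {j} + (\<Sum>B\<in>Omega_avoiding N j. h B + h (insert j B))"
proof -
  let ?A = "Omega_avoiding N j"
  have split: "Omega N = ?A \<union> insert {j} (insert j ` ?A)"
  proof (intro equalityI subsetI)
    fix B assume B: "B \<in> Omega N"
    show "B \<in> ?A \<union> insert {j} (insert j ` ?A)"
    proof (cases "j \<in> B \<and> B \<noteq> {j}")
      case True
      then have "B = insert j (B - {j})" "B - {j} \<in> ?A"
        using B by (auto simp: Omega_avoiding_def Omega_def)
      then show ?thesis by blast
    qed (use B in \<open>auto simp: Omega_avoiding_def\<close>)
  qed (use j in \<open>auto simp: Omega_avoiding_def Omega_def\<close>)
  have "inj_on (insert j) ?A" by (auto simp: Omega_avoiding_def inj_on_def)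
  moreover have "{j} \<notin> insert j ` ?A" by (auto simp: Omega_avoiding_def Omega_def)
  moreover have "(\<Sum>B\<in>Omega N. h B) = (\<Sum>B\<in>?A. h B) + (\<Sum>B\<in>insert {j} (insert j ` ?A). h B)"
    by (subst split, rule sum.union_disjoint) (auto simp: Omega_avoiding_def)
  ultimately show ?thesis by (simp add: sum.reindex sum.distrib add_ac)
qed

lemma sum_step_avg_eq:
  assumes j: "j \<in> {1..N}"
  shows "(\<Sum>B\<in>Omega N. 3 ^ card B * f B * step_avg j f B)
    = (\<Sum>B\<in>Omega N. 3 ^ card B * (f B)\<^sup>2) - edge_energy N f j"
proof -
  have pair: "3 ^ card B * f B * step_avg j f B
        + 3 ^ card (insert j B) * f (insert j B) * step_avg j f (insert j B)
      = 3 ^ card B * (f B)\<^sup>2 + 3 ^ card (insert j B) * (f (insert j B))\<^sup>2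
        - 3 ^ card B * (f (insert j B) - f B)\<^sup>2"
    if "B \<in> Omega_avoiding N j" for B
  proof -
    have "finite B" "j \<notin> B" "B \<noteq> {}"
      using that Omega_memD[of B N] by (auto simp: Omega_avoiding_def)
    then have "card (insert j B) = Suc (card B)" "2 \<le> card (insert j B)" "insert j B - {j} = B"
      by (auto simp: Suc_le_eq card_gt_0_iff)
    then show ?thesis
      using \<open>j \<notin> B\<close> by (simp add: step_avg_def power2_eq_square algebra_simps)
  qed
  have "step_avg j f {j} = f {j}" by (simp add: step_avg_def)
  then show ?thesis
    using pair
    by (simp add: sum_Omega_split[OF j] edge_energy_def sum_subtractf power2_eq_square cong: sum.cong)
qed

lemma sum_singleton_gap_le_edge_energy:
  assumes "1 \<le> N"
  shows "(\<Sum>j\<in>{1..N}. (f {j} - f {1})\<^sup>2) \<le> 2/3 * (\<Sum>j\<in>{1..N}. edge_energy N f j)"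
proof -
  let ?A = "{2..N}"
  have split: "{1..N} = insert 1 ?A" "1 \<notin> ?A" using assms by auto
  have "(\<Sum>j\<in>?A. 3 * (f (insert 1 {j}) - f {j})\<^sup>2)
      = (\<Sum>B\<in>(\<lambda>j. {j}) ` ?A. 3 ^ card B * (f (insert 1 B) - f B)\<^sup>2)"
    by (simp add: sum.reindex inj_on_def)
  also have "\<dots> \<le> edge_energy N f 1"
    unfolding edge_energy_def by (rule sum_mono2) (auto simp: Omega_avoiding_def Omega_def)
  finally have energy_1: "(\<Sum>j\<in>?A. 3 * (f (insert 1 {j}) - f {j})\<^sup>2) \<le> edge_energy N f 1" .
  have "3 * (f (insert j {1}) - f {1})\<^sup>2 \<le> edge_energy N f j" if "j \<in> ?A" for j
  proof -
    have "{1} \<in> Omega_avoiding N j" using that by (auto simp: Omega_avoiding_def Omega_def)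
    then show ?thesis
      using member_le_sum[where i = "{1}" and A = "Omega_avoiding N j"
          and f = "\<lambda>B. 3 ^ card B * (f (insert j B) - f B)\<^sup>2"]
      by (simp add: edge_energy_def)
  qed
  then have energy_j: "(\<Sum>j\<in>?A. 3 * (f (insert 1 {j}) - f {1})\<^sup>2) \<le> (\<Sum>j\<in>?A. edge_energy N f j)"
    by (intro sum_mono) (simp add: insert_commute)
  have "(f {j} - f {1})\<^sup>2
      \<le> 2/3 * (3 * (f (insert 1 {j}) - f {j})\<^sup>2) + 2/3 * (3 * (f (insert 1 {j}) - f {1})\<^sup>2)" for j
  proof -
    have "0 \<le> (f {j} + f {1} - 2 * f (insert 1 {j}))\<^sup>2" by simp
    then show ?thesis by (simp add: power2_eq_square algebra_simps)
  qed
  then have "(\<Sum>j\<in>?A. (f {j} - f {1})\<^sup>2)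
      \<le> 2/3 * (\<Sum>j\<in>?A. 3 * (f (insert 1 {j}) - f {j})\<^sup>2)
        + 2/3 * (\<Sum>j\<in>?A. 3 * (f (insert 1 {j}) - f {1})\<^sup>2)"
    by (simp add: sum_distrib_left sum_mono flip: sum.distrib)
  moreover have "(\<Sum>j\<in>{1..N}. (f {j} - f {1})\<^sup>2) = (\<Sum>j\<in>?A. (f {j} - f {1})\<^sup>2)"
    using split by simp
  moreover have "(\<Sum>j\<in>{1..N}. edge_energy N f j) = edge_energy N f 1 + (\<Sum>j\<in>?A. edge_energy N f j)"
    using split by simp
  ultimately show ?thesis
    using energy_1 energy_j by linarith
qed

lemma cube_energy_extension:
  assumes "j \<in> {1..N}"
  shows "(\<Sum>B\<in>Pow ({1..N} - {j}). 3 ^ card B * (g (insert j B) - g B)\<^sup>2)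
    = (g {j} - g {})\<^sup>2 + edge_energy N g j"
proof -
  have "Pow ({1..N} - {j}) = insert {} (Omega_avoiding N j)"
    by (auto simp: Omega_avoiding_def Omega_def)
  moreover have "{} \<notin> Omega_avoiding N j" by (simp add: Omega_avoiding_def Omega_def)
  ultimately show ?thesis by (simp add: edge_energy_def)
qed

lemma variance_le_edge_energy:
  assumes "1 \<le> N" and mean_zero: "(\<Sum>B\<in>Omega N. 3 ^ card B * f B) = 0"
  shows "(\<Sum>B\<in>Omega N. 3 ^ card B * (f B)\<^sup>2) \<le> 5/4 * (\<Sum>j\<in>{1..N}. edge_energy N f j)"
proof -
  \<comment> \<open>apply Efron--Stein to the extension of \<open>f\<close> by the value \<open>f {1}\<close> at the empty set\<close>
  define g where "g B = (if B = {} then f {1} else f B)" for B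
  have g_Omega: "g B = f B" if "B \<in> Omega N" for B using that by (simp add: g_def Omega_def)
  have "edge_energy N g j = edge_energy N f j" for j
    unfolding edge_energy_def
    by (intro sum.cong refl) (auto simp: g_def Omega_avoiding_def Omega_def)
  moreover have "cube_energy 3 {1..N} g = (\<Sum>j\<in>{1..N}. (g {j} - g {})\<^sup>2 + edge_energy N g j)"
    unfolding cube_energy_def by (rule sum.cong[OF refl]) (rule cube_energy_extension)
  ultimately have cube: "cube_energy 3 {1..N} g
      = (\<Sum>j\<in>{1..N}. (f {j} - f {1})\<^sup>2) + (\<Sum>j\<in>{1..N}. edge_energy N f j)"
    by (simp add: g_def sum.distrib)
  have squares: "(\<Sum>B\<in>Pow {1..N}. 3 ^ card B * (g B)\<^sup>2)
      = (f {1})\<^sup>2 + (\<Sum>B\<in>Omega N. 3 ^ card B * (f B)\<^sup>2)"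
    unfolding sum_Pow_atLeastAtMost_eq by (simp add: g_Omega cong: sum.cong) (simp add: g_def)
  have mean: "(\<Sum>B\<in>Pow {1..N}. 3 ^ card B * g B) = f {1}"
    unfolding sum_Pow_atLeastAtMost_eq using mean_zero by (simp add: g_Omega cong: sum.cong) (simp add: g_def)
  have "(3 + 1 :: real) ^ card {1..N} = 4 ^ N" "(3 :: real) / (3 + 1) = 3/4" by simp_all
  then have "(f {1})\<^sup>2 + (\<Sum>B\<in>Omega N. 3 ^ card B * (f B)\<^sup>2) - (f {1})\<^sup>2 / 4 ^ N
      \<le> 3/4 * ((\<Sum>j\<in>{1..N}. (f {j} - f {1})\<^sup>2) + (\<Sum>j\<in>{1..N}. edge_energy N f j))"
    using efron_stein_Pow[of "{1..N}" 3 g] unfolding squares mean cube by simp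
  moreover have "(f {1})\<^sup>2 / 4 ^ N \<le> (f {1})\<^sup>2"
    using divide_left_mono[of 1 "4 ^ N" "(f {1})\<^sup>2"] by simp
  ultimately show ?thesis
    using sum_singleton_gap_le_edge_energy[OF \<open>1 \<le> N\<close>, of f] by (simp only: distrib_left)
qed

lemma R_rayleigh_le:
  assumes "1 \<le> N" and mean_zero: "(\<Sum>B\<in>Omega N. 3 ^ card B * f B) = 0"
  shows "(\<Sum>B\<in>Omega N. 3 ^ card B * f B * (\<Sum>B'\<in>Omega N. R N B B' * f B'))
    \<le> (1 - 4 / (5 * real N)) * (\<Sum>B\<in>Omega N. 3 ^ card B * (f B)\<^sup>2)"
proof -
  define V where "V = (\<Sum>B\<in>Omega N. 3 ^ card B * (f B)\<^sup>2)"
  define E where "E = (\<Sum>j\<in>{1..N}. edge_energy N f j)"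
  have "(\<Sum>B\<in>Omega N. 3 ^ card B * f B * (\<Sum>B'\<in>Omega N. R N B B' * f B'))
      = (\<Sum>j\<in>{1..N}. \<Sum>B\<in>Omega N. 3 ^ card B * f B * step_avg j f B) / N"
    by (simp add: sum_R_mult sum_distrib_left sum_divide_distrib sum.swap[of _ "Omega N"] cong: sum.cong)
  also have "(\<Sum>j\<in>{1..N}. \<Sum>B\<in>Omega N. 3 ^ card B * f B * step_avg j f B)
      = (\<Sum>j\<in>{1..N}. V - edge_energy N f j)"
    by (rule sum.cong[OF refl]) (simp only: sum_step_avg_eq V_def)
  also have "(\<Sum>j\<in>{1..N}. V - edge_energy N f j) / N = V - E / N"
    using assms(1) by (simp add: E_def sum_subtractf field_simps)
  also have "\<dots> \<le> V - 4 / (5 * real N) * V"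
    using variance_le_edge_energy[OF assms] assms(1) by (simp add: V_def E_def field_simps)
  finally show ?thesis by (simp add: V_def algebra_simps)
qed

lemma Mdist_reversible:
  assumes "B \<in> Omega N" "B' \<in> Omega N"
  shows "Mdist N B * R N B B' = Mdist N B' * R N B' B"
proof -
  have "Mdist N B * R N B B' = 3 ^ card B * R N B B' / (4 ^ N - 1)" by (simp add: Mdist_def)
  also have "\<dots> = Mdist N B' * R N B' B" by (simp add: R_reversible[OF assms] Mdist_def)
  finally show ?thesis .
qed

lemma two_le_card_Omega:
  assumes "2 \<le> N"
  shows "2 \<le> card (Omega N)"
proof -
  have "card {{1::nat}, {2}} \<le> card (Omega N)"
    by (rule card_mono[OF finite_Omega]) (use assms in \<open>auto simp: Omega_def\<close>)
  then show ?thesis by simp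
qed

theorem mainTheorem6:
  fixes N :: nat
  assumes "N \<ge> 2"
  shows "(\<Sum>S\<in>Omega N. Mdist N S) = 1
    \<and> (\<forall>B'\<in>Omega N. (\<Sum>B\<in>Omega N. Mdist N B * R N B B') = Mdist N B')
    \<and> (\<forall>B\<in>Omega N. \<forall>B'\<in>Omega N. Mdist N B * R N B B' = Mdist N B' * R N B' B)
    \<and> (\<forall>e. bij_betw e {..<card (Omega N)} (Omega N) \<longrightarrow>
          spectral_gap (R_mat N e) \<ge> 1 / (3 * real N))"
proof (intro conjI ballI allI impI)
  have "1 \<le> N" using assms by simp
  show "(\<Sum>S\<in>Omega N. Mdist N S) = 1" by (rule sum_Mdist[OF \<open>1 \<le> N\<close>])
  show "Mdist N B * R N B B' = Mdist N B' * R N B' B" if "B \<in> Omega N" "B' \<in> Omega N" for B B'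
    using that by (rule Mdist_reversible)
  show "(\<Sum>B\<in>Omega N. Mdist N B * R N B B') = Mdist N B'" if "B' \<in> Omega N" for B'
    using Mdist_reversible sum_R_eq_1[OF \<open>1 \<le> N\<close>] that by (rule reversible_imp_stationary)
  fix e assume e: "bij_betw e {..<card (Omega N)} (Omega N)"
  have c: "1 - 4 / (5 * real N) < 1" using \<open>1 \<le> N\<close> by simp
  have "second_largest_eigenvalue (R_mat N e) \<le> 1 - 4 / (5 * real N)"
    unfolding R_mat_def
    by (rule second_largest_eigenvalue_kernel_le[where \<pi> = "\<lambda>B. 3 ^ card B",
          OF e two_le_card_Omega[OF assms] _ _ _ _ c])
      (simp, (fact sum_R_eq_1[OF \<open>1 \<le> N\<close>] R_reversible R_rayleigh_le[OF \<open>1 \<le> N\<close>])+)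
  moreover have "1 / (3 * real N) \<le> 4 / (5 * real N)" using \<open>1 \<le> N\<close> by (simp add: field_simps)
  ultimately show "spectral_gap (R_mat N e) \<ge> 1 / (3 * real N)"
    by (simp add: spectral_gap_def)
qed

end
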